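(* Let $M$ be a monoid generated by a finite set $A$, let $H$ be an $\mathcal{H}$-class of $M$, let $G=\mathcal{G}(H)$ be the Schützenberger group of $H$, and let $\Gamma(R,A)$ be the Schützenberger graph of the $\mathcal{R}$-class $R$ containing $H$. Then the left translation action of $G$ on $\Gamma(R,A)$ is by isometries and is outward proper. Moreover, the action is cocompact if and only if $R$ contains only finitely many $\mathcal{H}$-classes.
   Context: Green's relations on a monoid $M$: $x\mathcal{R}y$ iff $xM=yM$; $x\mathcal{L}y$ iff $Mx=My$; $\mathcal{H}=\mathcal{R}\cap\mathcal{L}$. For an $\mathcal{H}$-class $H$, let $\mathrm{Stab}(H)=\{s\in M:sH=H\}$ and $\sigma$ the congruence on it with $x\,\sigma\,y$ iff $xh=yh$ for all $h\in H$; the Schützenberger group is the group $\mathcal{G}(H)=\mathrm{Stab}(H)/\sigma$, acting on the $\mathcal{R}$-class $R\supseteq H$ by $(s/\sigma)\cdot r=sr$. A semimetric space is a set $X$ with $d:X\times X\to\mathbb{R}^{\ge0}\cup\{\infty\}$, $d(x,y)=0$ iff $x=y$, and the triangle inequality (no symmetry). For a directed graph $\Gamma$ with vertex set $V$, edge set $E$, source/target maps $\iota,\tau$, the semimetric space $\Gamma^*$ has point set $V\cup(E\times(0,1))$ with: $d(x,y)$ for vertices the least number of edges in a directed path ($\infty$ if none); $d((e,\mu),y)=(1-\mu)+d(\tau(e),y)$; $d(x,(e,\mu))=d(x,\iota(e))+\mu$; $d((e,\mu),(f,\nu))=\nu-\mu$ if $e=f$, $\nu\ge\mu$, else $d(\tau(e),\iota(f))+(1-\mu)+\nu$.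 The Schützenberger graph $\Gamma(R,A)$ is $\Delta^*$ where $\Delta$ has vertex set $R$ and an edge labelled $a$ from $x$ to $y$ whenever $x,y\in R$, $a\in A$, $xa=y$. The left translation action of $G$ on $\Gamma(R,A)$ sends a vertex $r$ to $gr$, the edge labelled $a$ from $x$ to $xa$ to the edge labelled $a$ from $gx$ to $gxa$, and a point $(e,\mu)$ to $(ge,\mu)$. Out-ball $\overrightarrow{\mathcal{B}}_r(x_0)=\{y:d(x_0,y)\le r\}$, in-ball $\overleftarrow{\mathcal{B}}_r(x_0)=\{y:d(y,x_0)\le r\}$, strong ball $\mathcal{B}_r(x_0)=\overrightarrow{\mathcal{B}}_r(x_0)\cap\overleftarrow{\mathcal{B}}_r(x_0)$. An action by isometries is outward proper if for every out-ball $B$ of finite radius $\{g:B\cap gB\neq\varnothing\}$ is finite, and cocompact if there is a strong ball $B$ of finite radius with $\{gB:g\in G\}$ covering the space. *)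

theory Defs
  imports Complex_Main "HOL-Library.Extended_Real"
begin

definition Rrel :: "'a::monoid_mult \<Rightarrow> 'a \<Rightarrow> bool" where
  "Rrel x y \<longleftrightarrow> range (\<lambda>m. x * m) = range (\<lambda>m. y * m)"

definition Lrel :: "'a::monoid_mult \<Rightarrow> 'a \<Rightarrow> bool" where
  "Lrel x y \<longleftrightarrow> range (\<lambda>m. m * x) = range (\<lambda>m. m * y)"

definition Hrel :: "'a::monoid_mult \<Rightarrow> 'a \<Rightarrow> bool" where
  "Hrel x y \<longleftrightarrow> Rrel x y \<and> Lrel x y"

definition Rclass :: "'a::monoid_mult \<Rightarrow> 'a set" where
  "Rclass x = {y. Rrel x y}"

definition Hclass :: "'a::monoid_mult \<Rightarrow> 'a set" where
  "Hclass x = {y. Hrel x y}"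

definition generates :: "'a::monoid_mult set \<Rightarrow> bool" where
  "generates A \<longleftrightarrow> (\<forall>m. \<exists>xs. set xs \<subseteq> A \<and> m = prod_list xs)"

definition stab :: "'a::monoid_mult set \<Rightarrow> 'a set" where
  "stab H = {s. (\<lambda>h. s * h) ` H = H}"

text \<open>The group Stab(H)/sigma, as the set of sigma-classes.\<close>
definition schG :: "'a::monoid_mult set \<Rightarrow> 'a set set" where
  "schG H = (\<lambda>s. {t \<in> stab H. \<forall>h\<in>H. t * h = s * h}) ` stab H"

definition gact :: "'a::monoid_mult set \<Rightarrow> 'a \<Rightarrow> 'a" where
  "gact g r = (SOME s. s \<in> g) * r"

text \<open>Points: vertices, and points (e, mu) on the edge e from x labelled a (to x*a).\<close>
datatype 'a spoint = Vtx 'a | EPt 'a 'a real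

definition spts :: "'a::monoid_mult set \<Rightarrow> 'a set \<Rightarrow> 'a spoint set" where
  "spts R A = Vtx ` R \<union>
     {EPt x a \<mu> | x a \<mu>. x \<in> R \<and> a \<in> A \<and> x * a \<in> R \<and> 0 < \<mu> \<and> \<mu> < 1}"

definition sstep :: "'a::monoid_mult set \<Rightarrow> 'a set \<Rightarrow> 'a \<Rightarrow> 'a \<Rightarrow> bool" where
  "sstep R A x y \<longleftrightarrow> x \<in> R \<and> y \<in> R \<and> (\<exists>a\<in>A. x * a = y)"

definition vdist :: "'a::monoid_mult set \<Rightarrow> 'a set \<Rightarrow> 'a \<Rightarrow> 'a \<Rightarrow> ereal" where
  "vdist R A x y = (if \<exists>n. (sstep R A ^^ n) x y
      then ereal (real (LEAST n. (sstep R A ^^ n) x y)) else \<infinity>)"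

definition sdist :: "'a::monoid_mult set \<Rightarrow> 'a set \<Rightarrow> 'a spoint \<Rightarrow> 'a spoint \<Rightarrow> ereal" where
  "sdist R A p q = (case p of
      Vtx x \<Rightarrow> (case q of
          Vtx y \<Rightarrow> vdist R A x y
        | EPt y b \<nu> \<Rightarrow> vdist R A x y + ereal \<nu>)
    | EPt x a \<mu> \<Rightarrow> (case q of
          Vtx y \<Rightarrow> ereal (1 - \<mu>) + vdist R A (x * a) y
        | EPt y b \<nu> \<Rightarrow> (if x = y \<and> a = b \<and> \<mu> \<le> \<nu> then ereal (\<nu> - \<mu>)
                         else vdist R A (x * a) y + ereal (1 - \<mu>) + ereal \<nu>)))"

definition spt_act :: "'a::monoid_mult set \<Rightarrow> 'a spoint \<Rightarrow> 'a spoint" where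
  "spt_act g p = (case p of Vtx r \<Rightarrow> Vtx (gact g r) | EPt x a \<mu> \<Rightarrow> EPt (gact g x) a \<mu>)"

definition outball :: "'a::monoid_mult set \<Rightarrow> 'a set \<Rightarrow> 'a spoint \<Rightarrow> real \<Rightarrow> 'a spoint set" where
  "outball R A x0 r = {y \<in> spts R A. sdist R A x0 y \<le> ereal r}"

definition inball :: "'a::monoid_mult set \<Rightarrow> 'a set \<Rightarrow> 'a spoint \<Rightarrow> real \<Rightarrow> 'a spoint set" where
  "inball R A x0 r = {y \<in> spts R A. sdist R A y x0 \<le> ereal r}"

definition strongball :: "'a::monoid_mult set \<Rightarrow> 'a set \<Rightarrow> 'a spoint \<Rightarrow> real \<Rightarrow> 'a spoint set" where
  "strongball R A x0 r = outball R A x0 r \<inter> inball R A x0 r"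

end

theory Submission
  imports Defs
begin

text \<open>
  By Green's lemma, every element of the stabiliser of H permutes the R-class R by left
  multiplication and preserves H-classes; two elements that agree on one vertex of R agree on all
  of R, so the Schuetzenberger group acts freely on R. Left multiplication commutes with the right
  action of the generators, hence is an automorphism of the Schuetzenberger graph and so an
  isometry. The source vertices of the points of an out-ball of radius r are reached from one of
  two fixed vertices by words of length at most r, so they form a finite set F; by freeness, only
  finitely many group elements can move a point of the ball back into it. If translates of one
  strong ball cover the graph, every H-class of R is the class of a vertex in F. Conversely, given
  finitely many H-class representatives, Green's lemma translates every point to one based at a
  representative, and since A generates M the graph on R is strongly connected, so the finitely
  many distances to and from these representatives are bounded.
\<close>

section \<open>Green's relations and Green's lemma\<close>

lemma right_ideal_subset_iff:
  fixes x y :: "'a::monoid_mult"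
  shows "range (\<lambda>m. x * m) \<subseteq> range (\<lambda>m. y * m) \<longleftrightarrow> (\<exists>v. x = y * v)"
proof
  show "range (\<lambda>m. x * m) \<subseteq> range (\<lambda>m. y * m) \<Longrightarrow> \<exists>v. x = y * v"
    using rangeI[of "\<lambda>m. x * m" 1] by auto
  show "\<exists>v. x = y * v \<Longrightarrow> range (\<lambda>m. x * m) \<subseteq> range (\<lambda>m. y * m)"
    by (auto simp: mult.assoc)
qed

lemma left_ideal_subset_iff:
  fixes x y :: "'a::monoid_mult"
  shows "range (\<lambda>m. m * x) \<subseteq> range (\<lambda>m. m * y) \<longleftrightarrow> (\<exists>v. x = v * y)"
proof
  show "range (\<lambda>m. m * x) \<subseteq> range (\<lambda>m. m * y) \<Longrightarrow> \<exists>v. x = v * y"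
    using rangeI[of "\<lambda>m. m * x" 1] by auto
  show "\<exists>v. x = v * y \<Longrightarrow> range (\<lambda>m. m * x) \<subseteq> range (\<lambda>m. m * y)"
    by (auto simp flip: mult.assoc)
qed

lemma Rrel_iff: "Rrel x y \<longleftrightarrow> (\<exists>u. y = x * u) \<and> (\<exists>v. x = y * v)"
  unfolding Rrel_def set_eq_subset right_ideal_subset_iff by blast

lemma Lrel_iff: "Lrel x y \<longleftrightarrow> (\<exists>u. y = u * x) \<and> (\<exists>v. x = v * y)"
  unfolding Lrel_def set_eq_subset left_ideal_subset_iff by blast

lemma mem_Rclass_iff: "y \<in> Rclass x \<longleftrightarrow> Rrel x y"
  unfolding Rclass_def by simp

lemma mem_Hclass_iff: "y \<in> Hclass x \<longleftrightarrow> Rrel x y \<and> Lrel x y"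
  unfolding Hclass_def Hrel_def by simp

lemma Rclass_eq: "Rrel x y \<Longrightarrow> Rclass x = Rclass y"
  unfolding Rclass_def Rrel_def by simp

lemma Hclass_eq: "Rrel x y \<Longrightarrow> Lrel x y \<Longrightarrow> Hclass x = Hclass y"
  unfolding Hclass_def Hrel_def Rrel_def Lrel_def by simp

lemma Rclass_self: "x \<in> Rclass x"
  unfolding mem_Rclass_iff Rrel_def by simp

lemma Hclass_self: "x \<in> Hclass x"
  unfolding mem_Hclass_iff Rrel_def Lrel_def by simp

lemma Hclass_subset_Rclass: "Hclass x \<subseteq> Rclass x"
  using mem_Hclass_iff mem_Rclass_iff by blast

lemma Rclass_right_multiple: "y \<in> Rclass x \<Longrightarrow> z \<in> Rclass x \<Longrightarrow> \<exists>u. z = y * u"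
  using Rclass_eq Rrel_iff mem_Rclass_iff by metis

lemma Rclass_mult_right:
  "y \<in> Rclass x \<Longrightarrow> y = y * u * v \<Longrightarrow> y * u \<in> Rclass x"
  using Rclass_eq Rrel_iff mem_Rclass_iff by (metis mult.assoc)

definition inverse_left_translations :: "'a::monoid_mult set \<Rightarrow> 'a \<Rightarrow> 'a \<Rightarrow> bool" where
  "inverse_left_translations X s k \<longleftrightarrow>
     (\<forall>x\<in>X. s * x \<in> X \<and> k * x \<in> X \<and> k * (s * x) = x \<and> s * (k * x) = x)"

lemma inverse_left_translations_sym:
  "inverse_left_translations X s k \<Longrightarrow> inverse_left_translations X k s"
  unfolding inverse_left_translations_def by blast

lemma left_translation_Rclass:
  assumes u: "u \<in> Rclass x0" and su: "s * u \<in> Rclass x0" and ksu: "k * (s * u) = u"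
    and x: "x \<in> Rclass x0"
  shows "s * x \<in> Rclass x0 \<and> k * (s * x) = x"
proof -
  obtain w where w: "x = u * w" using Rclass_right_multiple[OF u x] by blast
  obtain z where z: "u = x * z" using Rclass_right_multiple[OF x u] by blast
  have "k * (s * x) = k * (s * u) * w" by (simp add: w mult.assoc)
  also have "\<dots> = x" using ksu w by simp
  finally have "k * (s * x) = x" .
  have "u = u * w * z" using z by (simp add: w)
  then have "s * u = s * u * w * z" by (simp add: mult.assoc)
  then have "s * u * w \<in> Rclass x0" using Rclass_mult_right[OF su] by blast
  then show ?thesis using \<open>k * (s * x) = x\<close> w by (simp add: mult.assoc)
qed

lemma Greens_lemma:
  assumes "u \<in> Rclass x0" "v \<in> Rclass x0" "v = s * u" "u = k * v"
  shows "inverse_left_translations (Rclass x0) s k"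
  using left_translation_Rclass[of u x0 s k] left_translation_Rclass[of v x0 k s]
  unfolding inverse_left_translations_def assms(3,4)[symmetric] using assms by blast

lemma Hclass_left_translation:
  assumes "inverse_left_translations (Rclass x0) s k" and x: "x \<in> Rclass x0"
  shows "Hclass (s * x) = Hclass x"
proof (rule Hclass_eq[symmetric])
  have sx: "s * x \<in> Rclass x0" and "x = k * (s * x)"
    using assms unfolding inverse_left_translations_def by auto
  then show "Lrel x (s * x)" unfolding Lrel_iff by blast
  show "Rrel x (s * x)" using x sx Rclass_eq mem_Rclass_iff by metis
qed

lemma inverse_left_translations_stab:
  assumes st: "inverse_left_translations (Rclass x0) s k"
  shows "s \<in> stab (Hclass x0)"
proof -
  have Hclass: "Hclass h = Hclass x0" if "h \<in> Hclass x0" for h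
    using that Hclass_eq mem_Hclass_iff by metis
  have into: "t * h \<in> Hclass x0"
    if "inverse_left_translations (Rclass x0) t t'" "h \<in> Hclass x0" for t t' h
    using Hclass_left_translation[OF that(1)] Hclass_self Hclass that(2)
      Hclass_subset_Rclass by (metis subsetD)
  have "h \<in> (\<lambda>h. s * h) ` Hclass x0" if "h \<in> Hclass x0" for h
  proof
    have "h \<in> Rclass x0" using that Hclass_subset_Rclass by blast
    then show "h = s * (k * h)" using st unfolding inverse_left_translations_def by simp
    show "k * h \<in> Hclass x0" using into[OF inverse_left_translations_sym[OF st] that] .
  qed
  then show ?thesis unfolding stab_def using into[OF st] by blast
qed

lemma stab_inverse:
  assumes s: "s \<in> stab (Hclass x0)"
  obtains k where "k \<in> stab (Hclass x0)" "inverse_left_translations (Rclass x0) s k"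
proof -
  have "s * x0 \<in> Hclass x0" using s Hclass_self unfolding stab_def by blast
  then obtain k where k: "x0 = k * (s * x0)" and sx0: "s * x0 \<in> Rclass x0"
    unfolding mem_Hclass_iff Lrel_iff mem_Rclass_iff by blast
  have "inverse_left_translations (Rclass x0) s k"
    using Greens_lemma[OF Rclass_self sx0 refl k] .
  then show ?thesis
    using that inverse_left_translations_stab inverse_left_translations_sym by blast
qed

lemma Hclass_mult_stab:
  assumes "s \<in> stab (Hclass x0)" "x \<in> Rclass x0"
  shows "Hclass (s * x) = Hclass x"
  using stab_inverse[OF assms(1)] Hclass_left_translation assms(2) by metis

section \<open>The Schuetzenberger group and its action on the R-class\<close>

definition sigma_class :: "'a::monoid_mult set \<Rightarrow> 'a \<Rightarrow> 'a set" where
  "sigma_class H s = {t \<in> stab H. \<forall>h\<in>H. t * h = s * h}"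

lemma schG_eq: "schG H = sigma_class H ` stab H"
  unfolding schG_def sigma_class_def by simp

lemma mult_eq_on_Rclass:
  assumes "x \<in> Rclass x0" "y \<in> Rclass x0" "s * x = t * x"
  shows "s * y = t * y"
proof -
  obtain m where "y = x * m" using Rclass_right_multiple[OF assms(1,2)] by blast
  then show ?thesis using assms(3) by (simp flip: mult.assoc)
qed

lemma gact_sigma_class:
  assumes s: "s \<in> stab (Hclass x0)" and x: "x \<in> Rclass x0"
  shows "gact (sigma_class (Hclass x0) s) x = s * x"
proof -
  have "s \<in> sigma_class (Hclass x0) s" using s unfolding sigma_class_def by simp
  then have "(SOME t. t \<in> sigma_class (Hclass x0) s) \<in> sigma_class (Hclass x0) s" by (rule someI)
  then have "(SOME t. t \<in> sigma_class (Hclass x0) s) * x0 = s * x0"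
    using Hclass_self unfolding sigma_class_def by blast
  then show ?thesis unfolding gact_def by (rule mult_eq_on_Rclass[OF Rclass_self x])
qed

lemma sigma_class_eq:
  assumes "x \<in> Rclass x0" "s * x = t * x"
  shows "sigma_class (Hclass x0) s = sigma_class (Hclass x0) t"
proof -
  have "s * h = t * h" if "h \<in> Hclass x0" for h
    using mult_eq_on_Rclass[OF assms(1) subsetD[OF Hclass_subset_Rclass that] assms(2)] .
  then show ?thesis unfolding sigma_class_def by auto
qed

lemma inj_on_gact:
  assumes x: "x \<in> Rclass x0"
  shows "inj_on (\<lambda>g. gact g x) (schG (Hclass x0))"
proof
  fix g g' assume "g \<in> schG (Hclass x0)" "g' \<in> schG (Hclass x0)" and eq: "gact g x = gact g' x"
  then obtain s t where s: "s \<in> stab (Hclass x0)" and t: "t \<in> stab (Hclass x0)"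
    and g: "g = sigma_class (Hclass x0) s" and g': "g' = sigma_class (Hclass x0) t"
    unfolding schG_eq by blast
  have "s * x = t * x" using eq gact_sigma_class[OF s x] gact_sigma_class[OF t x] g g' by simp
  then show "g = g'" using sigma_class_eq[OF x] g g' by blast
qed

section \<open>Left translations are isometries of the Schuetzenberger graph\<close>

lemma relpowp_map:
  assumes "\<And>x y. P x y \<Longrightarrow> P (f x) (f y)"
  shows "(P ^^ n) x y \<Longrightarrow> (P ^^ n) (f x) (f y)"
proof (induction n arbitrary: y)
  case (Suc n)
  from Suc.prems obtain z where "(P ^^ n) x z" "P z y" by (rule relpowp_Suc_E)
  then show ?case using Suc.IH assms by (meson relpowp_Suc_I)
qed simp

lemma sstep_left_translation:
  "inverse_left_translations X s k \<Longrightarrow> sstep X A x y \<Longrightarrow> sstep X A (s * x) (s * y)"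
  unfolding inverse_left_translations_def sstep_def by (auto simp: mult.assoc)

lemma vdist_left_translation:
  assumes st: "inverse_left_translations X s k" and x: "x \<in> X" and y: "y \<in> X"
  shows "vdist X A (s * x) (s * y) = vdist X A x y"
proof -
  have "(sstep X A ^^ n) (s * x) (s * y) \<longleftrightarrow> (sstep X A ^^ n) x y" for n
  proof
    assume "(sstep X A ^^ n) (s * x) (s * y)"
    then have "(sstep X A ^^ n) (k * (s * x)) (k * (s * y))"
      using relpowp_map[of "sstep X A" "\<lambda>z. k * z"]
        sstep_left_translation[OF inverse_left_translations_sym[OF st]] by blast
    then show "(sstep X A ^^ n) x y"
      using st x y unfolding inverse_left_translations_def by simp
  next
    show "(sstep X A ^^ n) x y \<Longrightarrow> (sstep X A ^^ n) (s * x) (s * y)"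
      using relpowp_map[of "sstep X A" "\<lambda>z. s * z"] sstep_left_translation[OF st] by blast
  qed
  then show ?thesis unfolding vdist_def by simp
qed

definition spt_mult :: "'a::monoid_mult \<Rightarrow> 'a spoint \<Rightarrow> 'a spoint" where
  "spt_mult s p = (case p of Vtx r \<Rightarrow> Vtx (s * r) | EPt x a \<mu> \<Rightarrow> EPt (s * x) a \<mu>)"

lemma Vtx_mem_spts: "Vtx r \<in> spts R A \<longleftrightarrow> r \<in> R"
  unfolding spts_def by auto

lemma EPt_mem_spts: "EPt x a \<mu> \<in> spts R A \<longleftrightarrow> x \<in> R \<and> a \<in> A \<and> x * a \<in> R \<and> 0 < \<mu> \<and> \<mu> < 1"
  unfolding spts_def by auto

lemma spt_act_sigma_class:
  assumes "s \<in> stab (Hclass x0)" "p \<in> spts (Rclass x0) A"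
  shows "spt_act (sigma_class (Hclass x0) s) p = spt_mult s p"
  using assms gact_sigma_class unfolding spt_act_def spt_mult_def
  by (cases p) (auto simp: Vtx_mem_spts EPt_mem_spts)

lemma spt_mult_mem_spts:
  "inverse_left_translations X s k \<Longrightarrow> p \<in> spts X A \<Longrightarrow> spt_mult s p \<in> spts X A"
  unfolding inverse_left_translations_def spt_mult_def
  by (cases p) (auto simp: Vtx_mem_spts EPt_mem_spts mult.assoc[symmetric])

lemma spt_mult_inverse:
  "inverse_left_translations X s k \<Longrightarrow> p \<in> spts X A \<Longrightarrow> spt_mult k (spt_mult s p) = p"
  unfolding inverse_left_translations_def spt_mult_def
  by (cases p) (auto simp: Vtx_mem_spts EPt_mem_spts mult.assoc[symmetric])

lemma sdist_spt_mult:
  assumes st: "inverse_left_translations X s k" and "p \<in> spts X A" "q \<in> spts X A"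
  shows "sdist X A (spt_mult s p) (spt_mult s q) = sdist X A p q"
proof -
  have inj: "s * x = s * y \<longleftrightarrow> x = y" if "x \<in> X" "y \<in> X" for x y
    using st that unfolding inverse_left_translations_def by metis
  have vd: "vdist X A (s * x * a) (s * y) = vdist X A (x * a) y"
    if "x * a \<in> X" "y \<in> X" for x a y
    using vdist_left_translation[OF st that] by (simp add: mult.assoc)
  show ?thesis
    using assms(2,3) vdist_left_translation[OF st] vd inj unfolding sdist_def spt_mult_def
    by (cases p; cases q) (auto simp: Vtx_mem_spts EPt_mem_spts)
qed

lemma spt_act_isometry:
  assumes g: "g \<in> schG (Hclass x0)"
  shows "bij_betw (spt_act g) (spts (Rclass x0) A) (spts (Rclass x0) A)"
    and "\<forall>p\<in>spts (Rclass x0) A. \<forall>q\<in>spts (Rclass x0) A.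
       sdist (Rclass x0) A (spt_act g p) (spt_act g q) = sdist (Rclass x0) A p q"
proof -
  obtain s where s: "s \<in> stab (Hclass x0)" and gs: "g = sigma_class (Hclass x0) s"
    using g unfolding schG_eq by blast
  obtain k where k: "inverse_left_translations (Rclass x0) s k"
    using stab_inverse[OF s] by blast
  have "bij_betw (spt_mult s) (spts (Rclass x0) A) (spts (Rclass x0) A)"
    by (rule bij_betw_byWitness[where f' = "spt_mult k"])
      (use k inverse_left_translations_sym[OF k] spt_mult_inverse spt_mult_mem_spts in blast)+
  then show "bij_betw (spt_act g) (spts (Rclass x0) A) (spts (Rclass x0) A)"
    using bij_betw_cong spt_act_sigma_class[OF s] gs by metis
  show "\<forall>p\<in>spts (Rclass x0) A. \<forall>q\<in>spts (Rclass x0) A.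
       sdist (Rclass x0) A (spt_act g p) (spt_act g q) = sdist (Rclass x0) A p q"
    using spt_act_sigma_class[OF s] sdist_spt_mult[OF k] gs by simp
qed

section \<open>Outward properness\<close>

definition spt_source :: "'a spoint \<Rightarrow> 'a" where
  "spt_source p = (case p of Vtx x \<Rightarrow> x | EPt x a \<mu> \<Rightarrow> x)"

definition spt_target :: "'a::monoid_mult spoint \<Rightarrow> 'a" where
  "spt_target p = (case p of Vtx x \<Rightarrow> x | EPt x a \<mu> \<Rightarrow> x * a)"

lemma spt_source_spt_act: "spt_source (spt_act g p) = gact g (spt_source p)"
  unfolding spt_source_def spt_act_def by (cases p) auto

lemma spt_source_spt_mult: "spt_source (spt_mult s p) = s * spt_source p"
  unfolding spt_source_def spt_mult_def by (cases p) auto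

lemma spt_source_mem: "p \<in> spts R A \<Longrightarrow> spt_source p \<in> R"
  unfolding spt_source_def by (cases p) (auto simp: Vtx_mem_spts EPt_mem_spts)

lemma spt_target_mem: "p \<in> spts R A \<Longrightarrow> spt_target p \<in> R"
  unfolding spt_target_def by (cases p) (auto simp: Vtx_mem_spts EPt_mem_spts)

lemma spt_target_cases:
  "p \<in> spts R A \<Longrightarrow> spt_target p = spt_source p \<or> (\<exists>a\<in>A. spt_target p = spt_source p * a)"
  unfolding spt_source_def spt_target_def by (cases p) (auto simp: EPt_mem_spts)

lemma relpowp_sstep_prod_list:
  "(sstep R A ^^ n) w y \<Longrightarrow> \<exists>xs. set xs \<subseteq> A \<and> length xs = n \<and> y = w * prod_list xs"
proof (induction n arbitrary: y)
  case 0
  then show ?case by (intro exI[of _ "[]"]) simp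
next
  case (Suc n)
  from Suc.prems obtain z where "(sstep R A ^^ n) w z" "sstep R A z y" by (rule relpowp_Suc_E)
  with Suc.IH obtain xs a where "set xs \<subseteq> A" "length xs = n" "z = w * prod_list xs"
    and "a \<in> A" "y = z * a" unfolding sstep_def by blast
  then show ?case by (intro exI[of _ "xs @ [a]"]) (simp add: mult.assoc)
qed

definition reachable_within :: "'a::monoid_mult set \<Rightarrow> 'a \<Rightarrow> nat \<Rightarrow> 'a set" where
  "reachable_within A w N = {w * prod_list xs | xs. set xs \<subseteq> A \<and> length xs \<le> N}"

lemma finite_reachable_within: "finite A \<Longrightarrow> finite (reachable_within A w N)"
  unfolding reachable_within_def by (intro finite_image_set finite_lists_length_le)

lemma self_mem_reachable_within: "w \<in> reachable_within A w N"
  unfolding reachable_within_def by (intro CollectI exI[of _ "[]"]) simp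

lemma vdist_le_imp_reachable_within:
  assumes "vdist R A w y \<le> ereal r"
  shows "y \<in> reachable_within A w (nat \<lceil>r\<rceil>)"
proof -
  have ex: "\<exists>n. (sstep R A ^^ n) w y" using assms unfolding vdist_def by (auto split: if_splits)
  define n where "n = (LEAST n. (sstep R A ^^ n) w y)"
  have "(sstep R A ^^ n) w y" unfolding n_def using ex by (rule LeastI_ex)
  moreover have "n \<le> nat \<lceil>r\<rceil>" using assms ex unfolding vdist_def n_def by simp linarith
  ultimately show ?thesis
    using relpowp_sstep_prod_list unfolding reachable_within_def by fastforce
qed

lemma sdist_le_imp_vdist_le:
  assumes "p \<in> spts R A" "q \<in> spts R A" "sdist R A p q \<le> ereal r"
  shows "spt_source q = spt_source p \<or> vdist R A (spt_source p) (spt_source q) \<le> ereal r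
    \<or> vdist R A (spt_target p) (spt_source q) \<le> ereal r"
proof -
  have drop_right: "a \<le> ereal r" if "a + ereal t \<le> ereal r" "0 \<le> t" for a t
    using order_trans[OF ereal_le_add_self that(1)] that(2) by simp
  have drop_left: "a \<le> ereal r" if "ereal t + a \<le> ereal r" "0 \<le> t" for a t
    using order_trans[OF ereal_le_add_self2 that(1)] that(2) by simp
  show ?thesis
    using assms unfolding sdist_def spt_source_def spt_target_def
    by (cases p; cases q) (auto simp: Vtx_mem_spts EPt_mem_spts split: if_splits
      dest!: drop_right drop_left)
qed

definition outball_sources :: "'a::monoid_mult set \<Rightarrow> 'a spoint \<Rightarrow> real \<Rightarrow> 'a set" where
  "outball_sources A p0 r = reachable_within A (spt_source p0) (nat \<lceil>r\<rceil>)
     \<union> reachable_within A (spt_target p0) (nat \<lceil>r\<rceil>)"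

lemma finite_outball_sources: "finite A \<Longrightarrow> finite (outball_sources A p0 r)"
  unfolding outball_sources_def by (simp add: finite_reachable_within)

lemma spt_source_mem_outball_sources:
  assumes "p0 \<in> spts R A" "q \<in> outball R A p0 r"
  shows "spt_source q \<in> outball_sources A p0 r"
  using assms sdist_le_imp_vdist_le[OF assms(1)] vdist_le_imp_reachable_within
    self_mem_reachable_within
  unfolding outball_def outball_sources_def by fastforce

lemma outward_proper:
  assumes A: "finite A" and p0: "p0 \<in> spts (Rclass x0) A"
  shows "finite {g \<in> schG (Hclass x0).
    outball (Rclass x0) A p0 r \<inter> spt_act g ` outball (Rclass x0) A p0 r \<noteq> {}}"
proof (rule finite_subset)
  let ?F = "outball_sources A p0 r"
  show "finite (\<Union>x\<in>?F \<inter> Rclass x0. (\<lambda>g. gact g x) -` ?F \<inter> schG (Hclass x0))"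
    using finite_outball_sources[OF A] inj_on_gact by (blast intro: finite_vimage_IntI)
  show "{g \<in> schG (Hclass x0). outball (Rclass x0) A p0 r \<inter> spt_act g ` outball (Rclass x0) A p0 r \<noteq> {}}
    \<subseteq> (\<Union>x\<in>?F \<inter> Rclass x0. (\<lambda>g. gact g x) -` ?F \<inter> schG (Hclass x0))"
  proof
    fix g assume "g \<in> {g \<in> schG (Hclass x0).
      outball (Rclass x0) A p0 r \<inter> spt_act g ` outball (Rclass x0) A p0 r \<noteq> {}}"
    then obtain p where g: "g \<in> schG (Hclass x0)" and p: "p \<in> outball (Rclass x0) A p0 r"
      and gp: "spt_act g p \<in> outball (Rclass x0) A p0 r" by blast
    have "spt_source p \<in> ?F \<inter> Rclass x0"
      using spt_source_mem_outball_sources[OF p0 p] spt_source_mem p unfolding outball_def by blast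
    moreover have "gact g (spt_source p) \<in> ?F"
      using spt_source_mem_outball_sources[OF p0 gp] by (simp add: spt_source_spt_act)
    ultimately show "g \<in> (\<Union>x\<in>?F \<inter> Rclass x0. (\<lambda>g. gact g x) -` ?F \<inter> schG (Hclass x0))"
      using g by blast
  qed
qed

section \<open>Cocompactness\<close>

lemma cocompact_imp_finite_Hclasses:
  assumes A: "finite A" and p0: "p0 \<in> spts (Rclass x0) A"
    and cover: "spts (Rclass x0) A \<subseteq> (\<Union>g\<in>schG (Hclass x0). spt_act g ` strongball (Rclass x0) A p0 r)"
  shows "finite {Hclass y | y. y \<in> Rclass x0}"
proof (rule finite_subset)
  let ?F = "outball_sources A p0 r"
  show "finite (Hclass ` ?F)" using finite_outball_sources[OF A] by blast
  show "{Hclass y | y. y \<in> Rclass x0} \<subseteq> Hclass ` ?F"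
  proof clarify
    fix y assume y: "y \<in> Rclass x0"
    then obtain g p where g: "g \<in> schG (Hclass x0)" and p: "p \<in> outball (Rclass x0) A p0 r"
      and yp: "Vtx y = spt_act g p"
      using cover Vtx_mem_spts unfolding strongball_def by blast
    have "y = spt_source (spt_act g p)" unfolding yp[symmetric] spt_source_def by simp
    then have "y = gact g (spt_source p)" by (simp only: spt_source_spt_act)
    moreover obtain s where s: "s \<in> stab (Hclass x0)" and "g = sigma_class (Hclass x0) s"
      using g unfolding schG_eq by blast
    moreover have pR: "spt_source p \<in> Rclass x0"
      using p spt_source_mem unfolding outball_def by blast
    ultimately have "Hclass y = Hclass (spt_source p)"
      using gact_sigma_class Hclass_mult_stab by metis
    then show "Hclass y \<in> Hclass ` ?F"
      using spt_source_mem_outball_sources[OF p0 p] by blast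
  qed
qed

lemma sstep_path:
  assumes "w \<in> Rclass x0" "set xs \<subseteq> A" "w * prod_list xs \<in> Rclass x0"
  shows "(sstep (Rclass x0) A ^^ length xs) w (w * prod_list xs)"
  using assms
proof (induction xs arbitrary: w)
  case (Cons a xs)
  obtain u where "w = w * (a * prod_list xs) * u"
    using Rclass_right_multiple[OF Cons.prems(3) Cons.prems(1)] by auto
  then have "w * a \<in> Rclass x0"
    using Rclass_mult_right[OF Cons.prems(1), of a "prod_list xs * u"] by (simp add: mult.assoc)
  moreover have "(sstep (Rclass x0) A ^^ length xs) (w * a) (w * a * prod_list xs)"
    using Cons.IH[OF calculation] Cons.prems(2,3) by (simp add: mult.assoc)
  moreover have "sstep (Rclass x0) A w (w * a)"
    using calculation(1) Cons.prems(1,2) unfolding sstep_def by auto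
  ultimately have "(sstep (Rclass x0) A ^^ Suc (length xs)) w (w * a * prod_list xs)"
    by (blast intro: relpowp_Suc_I2)
  then show ?case by (simp add: mult.assoc)
qed simp

lemma vdist_Rclass:
  assumes "generates A" "w \<in> Rclass x0" "z \<in> Rclass x0"
  shows "\<exists>n::nat. vdist (Rclass x0) A w z = ereal (real n)"
proof -
  obtain u where "z = w * u" using Rclass_right_multiple assms(2,3) by blast
  moreover obtain xs where "set xs \<subseteq> A" "u = prod_list xs"
    using assms(1) unfolding generates_def by blast
  ultimately have "\<exists>n. (sstep (Rclass x0) A ^^ n) w z" using sstep_path assms(2,3) by blast
  then show ?thesis unfolding vdist_def by simp
qed

lemma vdist_bounded_on_finite:
  assumes "generates A" "finite P" "P \<subseteq> Rclass x0 \<times> Rclass x0"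
  shows "\<exists>r. \<forall>(w, z)\<in>P. vdist (Rclass x0) A w z \<le> ereal r"
  using assms(2,3)
proof (induction P rule: finite_induct)
  case (insert wz P)
  then obtain r where r: "\<forall>(w, z)\<in>P. vdist (Rclass x0) A w z \<le> ereal r" by blast
  obtain n :: nat where n: "vdist (Rclass x0) A (fst wz) (snd wz) = ereal (real n)"
    using vdist_Rclass[OF assms(1)] insert.prems by (metis mem_Sigma_iff insert_subset prod.collapse)
  have "\<forall>(w, z)\<in>insert wz P. vdist (Rclass x0) A w z \<le> ereal (max r (real n))"
    using r n by (force intro: order_trans)
  then show ?case by blast
qed simp

lemma mem_strongball_Vtx:
  assumes "p \<in> spts R A" "vdist R A w (spt_source p) \<le> ereal r"
    "vdist R A (spt_target p) w \<le> ereal r"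
  shows "p \<in> strongball R A (Vtx w) (r + 1)"
proof -
  have "a + ereal t \<le> ereal (r + 1)" "ereal t + a \<le> ereal (r + 1)"
    if "a \<le> ereal r" "t \<le> 1" for a t
    using that by (cases a; simp)+
  then show ?thesis
    using assms unfolding strongball_def outball_def inball_def sdist_def spt_source_def
      spt_target_def
    by (cases p) (auto simp: EPt_mem_spts intro: order_trans)
qed

lemma translate_to_Hclass_representative:
  assumes q: "q \<in> spts (Rclass x0) A" and "y \<in> Rclass x0"
    and "Hclass y = Hclass (spt_source q)"
  obtains g q' where "g \<in> schG (Hclass x0)" "q' \<in> spts (Rclass x0) A" "spt_source q' = y"
    "spt_act g q' = q"
proof -
  have "y \<in> Hclass (spt_source q)" using Hclass_self[of y] assms(3) by simp
  then obtain k k' where yq: "y = k' * spt_source q" and qy: "spt_source q = k * y"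
    unfolding mem_Hclass_iff Lrel_iff by blast
  have st: "inverse_left_translations (Rclass x0) k' k"
    using Greens_lemma[OF spt_source_mem[OF q] assms(2) yq qy] .
  have k: "k \<in> stab (Hclass x0)"
    using inverse_left_translations_stab[OF inverse_left_translations_sym[OF st]] .
  have q': "spt_mult k' q \<in> spts (Rclass x0) A" using spt_mult_mem_spts[OF st q] .
  show ?thesis
  proof
    show "sigma_class (Hclass x0) k \<in> schG (Hclass x0)" unfolding schG_eq using k by blast
    show "spt_source (spt_mult k' q) = y" unfolding spt_source_spt_mult yq ..
    show "spt_act (sigma_class (Hclass x0) k) (spt_mult k' q) = q"
      using spt_act_sigma_class[OF k q'] spt_mult_inverse[OF st q] by simp
  qed (use q' in blast)
qed

lemma finite_Hclasses_imp_cocompact: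
  assumes A: "finite A" and gen: "generates A"
    and fin: "finite {Hclass y | y. y \<in> Rclass x0}"
  shows "\<exists>p0\<in>spts (Rclass x0) A. \<exists>r.
    spts (Rclass x0) A \<subseteq> (\<Union>g\<in>schG (Hclass x0). spt_act g ` strongball (Rclass x0) A p0 r)"
proof -
  have "finite (Hclass ` Rclass x0)" using fin by (simp add: setcompr_eq_image)
  from finite_subset_image[OF this subset_refl] obtain Y
    where Y: "Y \<subseteq> Rclass x0" "finite Y" "Hclass ` Rclass x0 = Hclass ` Y" by blast
  define T where "T = Y \<union> (\<lambda>(y, a). y * a) ` (Y \<times> A)"
  let ?P = "({x0} \<times> Y) \<union> ((T \<inter> Rclass x0) \<times> {x0})"
  have "finite ?P" unfolding T_def using Y(2) A by simp
  moreover have "?P \<subseteq> Rclass x0 \<times> Rclass x0" using Y(1) Rclass_self by blast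
  ultimately obtain r where "\<forall>(w, z)\<in>?P. vdist (Rclass x0) A w z \<le> ereal r"
    using vdist_bounded_on_finite[OF gen] by blast
  then have r_out: "\<And>y. y \<in> Y \<Longrightarrow> vdist (Rclass x0) A x0 y \<le> ereal r"
    and r_in: "\<And>t. t \<in> T \<inter> Rclass x0 \<Longrightarrow> vdist (Rclass x0) A t x0 \<le> ereal r"
    by auto
  have "q \<in> (\<Union>g\<in>schG (Hclass x0). spt_act g ` strongball (Rclass x0) A (Vtx x0) (r + 1))"
    if q: "q \<in> spts (Rclass x0) A" for q
  proof -
    have "Hclass (spt_source q) \<in> Hclass ` Y"
      unfolding Y(3)[symmetric] using spt_source_mem[OF q] by (rule imageI)
    then obtain y where y: "y \<in> Y" "Hclass y = Hclass (spt_source q)" by auto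
    obtain g q' where g: "g \<in> schG (Hclass x0)" and q': "q' \<in> spts (Rclass x0) A"
      and source: "spt_source q' = y" and "spt_act g q' = q"
      using translate_to_Hclass_representative[OF q _ y(2)] y(1) Y(1) by blast
    have "spt_target q' \<in> T"
      using spt_target_cases[OF q'] y(1) unfolding source T_def by auto
    then have "q' \<in> strongball (Rclass x0) A (Vtx x0) (r + 1)"
      using mem_strongball_Vtx[OF q'] r_out[OF y(1)] r_in spt_target_mem[OF q'] source by simp
    then show ?thesis using g \<open>spt_act g q' = q\<close> by blast
  qed
  then show ?thesis using Rclass_self Vtx_mem_spts by blast
qed

theorem theorem5p1:
  fixes A :: "'a::monoid_mult set" and x0 :: 'a and H R :: "'a set"
  assumes "finite A" and "generates A"
    and "H = Hclass x0" and "R = Rclass x0"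
  shows "(\<forall>g\<in>schG H. bij_betw (spt_act g) (spts R A) (spts R A) \<and>
            (\<forall>p\<in>spts R A. \<forall>q\<in>spts R A. sdist R A (spt_act g p) (spt_act g q) = sdist R A p q))
       \<and> (\<forall>p0\<in>spts R A. \<forall>r::real.
            finite {g \<in> schG H. outball R A p0 r \<inter> spt_act g ` outball R A p0 r \<noteq> {}})
       \<and> ((\<exists>p0\<in>spts R A. \<exists>r::real.
             spts R A \<subseteq> (\<Union>g\<in>schG H. spt_act g ` strongball R A p0 r))
          \<longleftrightarrow> finite {Hclass y | y. y \<in> R})"
  unfolding assms(3,4)
proof (intro conjI)
  show "\<forall>g\<in>schG (Hclass x0). bij_betw (spt_act g) (spts (Rclass x0) A) (spts (Rclass x0) A) \<and>
      (\<forall>p\<in>spts (Rclass x0) A. \<forall>q\<in>spts (Rclass x0) A.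
        sdist (Rclass x0) A (spt_act g p) (spt_act g q) = sdist (Rclass x0) A p q)"
    using spt_act_isometry by blast
  show "\<forall>p0\<in>spts (Rclass x0) A. \<forall>r. finite {g \<in> schG (Hclass x0).
      outball (Rclass x0) A p0 r \<inter> spt_act g ` outball (Rclass x0) A p0 r \<noteq> {}}"
    using outward_proper[OF assms(1)] by blast
  show "(\<exists>p0\<in>spts (Rclass x0) A. \<exists>r.
      spts (Rclass x0) A \<subseteq> (\<Union>g\<in>schG (Hclass x0). spt_act g ` strongball (Rclass x0) A p0 r))
    \<longleftrightarrow> finite {Hclass y | y. y \<in> Rclass x0}"
  proof
    assume "\<exists>p0\<in>spts (Rclass x0) A. \<exists>r.
      spts (Rclass x0) A \<subseteq> (\<Union>g\<in>schG (Hclass x0). spt_act g ` strongball (Rclass x0) A p0 r)"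
    then show "finite {Hclass y | y. y \<in> Rclass x0}"
      using cocompact_imp_finite_Hclasses[OF assms(1)] by blast
  qed (rule finite_Hclasses_imp_cocompact[OF assms(1,2)])
qed

end
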